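(* Fix $d\ge 1$, a Lipschitz constant $G>0$, a horizon $T\in\mathbb{N}_+$ and a feature sequence $h_{1:T}=(h_1,\ldots,h_T)$ with $h_t\in\mathbb{R}^d$, $\|h_t\|_2\le 1$ for all $t$ and $\sum_{t=1}^T\|h_t\|_2^2\ge 1$. Let $\varepsilon>0$. Run the single-feature learner described in the context (with 1D FreeGrad with hyperparameter $\varepsilon$ and Lipschitz constant $G$ as subroutine). Then there is a poly-logarithmic function $\mathrm{polylog}(\cdot,\cdot,\cdot)$ (not depending on $T$, the comparator, or the environment) such that for every comparator sequence $u_{1:T}=(u_1,\ldots,u_T)\in\mathbb{R}^{dT}$ lying in $\mathrm{span}(h_{1:T})$ (i.e. $u_t=\hat u\, h_t$ for all $t$, for some $\hat u\in\mathbb{R}$), $$\mathrm{Reg}_T(u_{1:T})\le \varepsilon G+\|u_{1:T}\|_2\, G\cdot \mathrm{polylog}\Big(\max_t\|u_t\|_2,\,T,\,\varepsilon^{-1}\Big),$$ where $\|u_{1:T}\|_2=(\sum_{t=1}^T\|u_t\|_2^2)^{1/2}$.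
   Context: Online convex optimization game: in each round $t=1,2,\ldots$ the player picks $x_t\in\mathbb{R}^d$ based on past observations; an adversarial environment then reveals a convex loss $l_t:\mathbb{R}^d\to\mathbb{R}$ that is $G$-Lipschitz w.r.t. $\|\cdot\|_2$ (possibly depending on $x_1,\ldots,x_t$), and the player suffers $l_t(x_t)$ and observes a subgradient $g_t\in\partial l_t(x_t)$ (so $\|g_t\|_2\le G$). For a comparator sequence $u_1,\ldots,u_T\in\mathbb{R}^d$, the unconstrained dynamic regret is $\mathrm{Reg}_T(u_{1:T})=\sup_{\text{environments}}\big[\sum_{t=1}^T l_t(x_t)-\sum_{t=1}^T l_t(u_t)\big]$. FreeGrad (dimension $k$, hyperparameter $\varepsilon>0$, Lipschitz constant $\hat G>0$): initialize $s=0\in\mathbb{R}^k$, $v=\hat G^2$; each round predict $\hat x=-\varepsilon s\cdot\frac{(2v+\hat G\|s\|_2)\hat G^2}{2(v+\hat G\|s\|_2)^2\sqrt v}\exp\!\big(\frac{\|s\|_2^2}{2v+2\hat G\|s\|_2}\big)$, then observe a gradient $\hat g$ (with $\|\hat g\|_2\le\hat G$) and update $s\leftarrow s+\hat g$, $v\leftarrow v+\|\hat g\|_2^2$. Single-feature learner: in round $t$, receive $h_t$; if $h_t\neq 0$, query the 1D FreeGrad subroutine $\mathcal{A}$ (hyperparameter $\varepsilon$, $\hat G=G$) for its output $\hat x_t\in\mathbb{R}$ (otherwise $\hat x_t$ is arbitrary); predict $x_t=\hat x_t h_t$; receive $g_t$; if $h_t\ne 0$, send $\hat g_t=\langle g_t,h_t\rangle$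 to $\mathcal{A}$ as its gradient. *)

theory Defs
  imports "HOL-Analysis.Analysis"
begin

definition freegrad_pred :: "real \<Rightarrow> real \<Rightarrow> 'k::real_normed_vector \<Rightarrow> real \<Rightarrow> 'k" where
  "freegrad_pred eps Gh s v =
     (- eps * ((2 * v + Gh * norm s) * Gh\<^sup>2) / (2 * (v + Gh * norm s)\<^sup>2 * sqrt v)
        * exp ((norm s)\<^sup>2 / (2 * v + 2 * Gh * norm s))) *\<^sub>R s"

text \<open>Run of the single-feature learner (1D FreeGrad subroutine, hyperparameter eps,
  Lipschitz constant G) against an adaptive environment whose subgradient at round t
  is Gr t [x_1,...,x_t].  State after n rounds: (s, v, [x_1,...,x_n]).
  If h_t = 0 the subroutine output is irrelevant since x_t = xhat_t * h_t = 0.\<close>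
primrec sfl_state :: "real \<Rightarrow> real \<Rightarrow> (nat \<Rightarrow> 'a::euclidean_space)
    \<Rightarrow> (nat \<Rightarrow> 'a list \<Rightarrow> 'a) \<Rightarrow> nat \<Rightarrow> real \<times> real \<times> 'a list" where
  "sfl_state eps G h Gr 0 = (0, G\<^sup>2, [])"
| "sfl_state eps G h Gr (Suc n) =
     (case sfl_state eps G h Gr n of (s, v, xs) \<Rightarrow>
        (let t = Suc n;
             xhat = (if h t \<noteq> 0 then freegrad_pred eps G s v else 0);
             xs' = xs @ [xhat *\<^sub>R h t];
             gh = Gr t xs' \<bullet> h t
         in if h t \<noteq> 0 then (s + gh, v + gh\<^sup>2, xs') else (s, v, xs')))"

text \<open>Predictions x_1,...,x_T (x_t is the (t-1)-th list entry).\<close>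
definition sfl_preds :: "real \<Rightarrow> real \<Rightarrow> (nat \<Rightarrow> 'a::euclidean_space)
    \<Rightarrow> (nat \<Rightarrow> 'a list \<Rightarrow> 'a) \<Rightarrow> nat \<Rightarrow> 'a list" where
  "sfl_preds eps G h Gr T = snd (snd (sfl_state eps G h Gr T))"

text \<open>Admissible adaptive environment: in round t, given the history [x_1,...,x_t],
  it reveals a convex G-Lipschitz loss L t hist and a subgradient Gr t hist of it at x_t.\<close>
definition valid_env :: "real \<Rightarrow> nat \<Rightarrow> (nat \<Rightarrow> 'a list \<Rightarrow> 'a::euclidean_space \<Rightarrow> real)
    \<Rightarrow> (nat \<Rightarrow> 'a list \<Rightarrow> 'a) \<Rightarrow> bool" where
  "valid_env G T L Gr \<longleftrightarrow>
     (\<forall>t\<in>{1..T}. \<forall>hs. length hs = t \<longrightarrow>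
        convex_on UNIV (L t hs) \<and> G-lipschitz_on UNIV (L t hs) \<and>
        (\<forall>y. L t hs y \<ge> L t hs (last hs) + Gr t hs \<bullet> (y - last hs)))"

definition polylog3 :: "(real \<Rightarrow> real \<Rightarrow> real \<Rightarrow> real) \<Rightarrow> bool" where
  "polylog3 P \<longleftrightarrow> (\<exists>C (k::nat). \<forall>x y z. x \<ge> 0 \<longrightarrow> y \<ge> 0 \<longrightarrow> z \<ge> 0 \<longrightarrow>
      \<bar>P x y z\<bar> \<le> C * (ln (exp 1 + x + y + z)) ^ k)"

end

theory Submission
  imports Defs
begin

(* FreeGrad is a potential method.  With s the sum and v = G^2 plus the sum of squares of the
   one-dimensional gradients seen so far, its prediction is minus the s-derivative of
   Psi(s, v) = eps G^2 / sqrt v * exp (s^2 / (2 v + 2 G |s|)), and in every round the linear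
   loss g * x is paid for by a decrease of Psi: after rescaling to G = 1 this is an inequality
   between exponentials which, via lower bounds for ln (1 + x), reduces to the nonnegativity of
   explicit polynomials.
   Summing, FreeGrad's linear loss is at most eps G - Psi(S, V).  By convexity the regret of the
   single-feature learner against u_t = uh h_t is at most its linear regret for the gradients
   <g_t, h_t>, hence at most eps G + |uh| |S| - Psi(S, V).  As Psi grows like exp (S^2 / V) or
   exp (|S| / G), the last two terms are O(|uh| sqrt V log(...)), and V <= 2 G^2 sum |h_t|^2
   turns |uh| sqrt V into G times the norm of the comparator sequence. *)

section \<open>Elementary inequalities\<close>

lemma ln_one_plus_pade_lower_bound:
  fixes x :: real
  assumes "0 \<le> x"
  shows "2 * x / (2 + x) \<le> ln (1 + x)"
proof -
  let ?f = "\<lambda>z::real. ln (1 + z) - 2 * z / (2 + z)"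
  have "?f 0 \<le> ?f x"
  proof (rule DERIV_nonneg_imp_nondecreasing[OF assms])
    fix z :: real
    assume "0 \<le> z" "z \<le> x"
    then have "(?f has_real_derivative 1 / (1 + z) - (2 * (2 + z) - 2 * z) / (2 + z)^2) (at z)"
      by (auto intro!: derivative_eq_intros simp: power2_eq_square)
    moreover have "1 / (1 + z) - (2 * (2 + z) - 2 * z) / (2 + z)^2 = z^2 / ((1 + z) * (2 + z)^2)"
      using \<open>0 \<le> z\<close> by (simp add: field_simps) (simp add: algebra_simps power2_eq_square)
    ultimately show "\<exists>d. (?f has_real_derivative d) (at z) \<and> 0 \<le> d"
      using \<open>0 \<le> z\<close> by auto
  qed
  then show ?thesis by simp
qed

lemma ln_one_plus_nonneg_lower_bound:
  fixes x :: real
  assumes "0 \<le> x"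
  shows "x - x^2 / 2 \<le> ln (1 + x)"
proof -
  let ?f = "\<lambda>z::real. ln (1 + z) - z + z^2 / 2"
  have "?f 0 \<le> ?f x"
  proof (rule DERIV_nonneg_imp_nondecreasing[OF assms])
    fix z :: real
    assume "0 \<le> z" "z \<le> x"
    then have "(?f has_real_derivative z^2 / (1 + z)) (at z)"
      by (auto intro!: derivative_eq_intros simp: field_simps power2_eq_square)
    then show "\<exists>d. (?f has_real_derivative d) (at z) \<and> 0 \<le> d"
      using \<open>0 \<le> z\<close> by auto
  qed
  then show ?thesis by simp
qed

lemma ln_one_plus_nonpos_lower_bound:
  fixes x :: real
  assumes "-1 < x" "x \<le> 0"
  shows "x - x^2 / (2 * (1 + x)) \<le> ln (1 + x)"
proof -
  let ?f = "\<lambda>z::real. ln (1 + z) - z + z^2 / (2 * (1 + z))"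
  have "?f 0 \<le> ?f x"
  proof (rule DERIV_nonpos_imp_nonincreasing[OF assms(2)])
    fix z :: real
    assume "x \<le> z" "z \<le> 0"
    then have "(?f has_real_derivative
        1 / (1 + z) - 1 + (2 * z * (2 * (1 + z)) - z^2 * 2) / (2 * (1 + z))^2) (at z)"
      using assms(1) by (auto intro!: derivative_eq_intros simp: power2_eq_square)
    moreover have "1 / (1 + z) - 1 + (2 * z * (2 * (1 + z)) - z^2 * 2) / (2 * (1 + z))^2
        = - (z^2 / (2 * (1 + z)^2))"
    proof -
      define w where "w = 1 + z"
      have "0 < w" using \<open>x \<le> z\<close> assms(1) unfolding w_def by simp
      then have "1 / w - 1 + (2 * (w - 1) * (2 * w) - (w - 1)^2 * 2) / (2 * w)^2 = - ((w - 1)^2 / (2 * w^2))"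
        by (simp add: field_simps power2_eq_square)
      then show ?thesis unfolding w_def by simp
    qed
    ultimately show "\<exists>d. (?f has_real_derivative d) (at z) \<and> d \<le> 0"
      by fastforce
  qed
  then show ?thesis by simp
qed

lemma bound_of_square_quarter_le_ln:
  fixes z \<Lambda> :: real
  assumes "0 < z" "1 \<le> \<Lambda>" "z^2 / 4 \<le> ln z + \<Lambda>"
  shows "z \<le> 4 * \<Lambda>"
proof -
  have "ln z \<le> z - 1" using ln_le_minus_one assms(1) by simp
  moreover have "z - 1 \<le> z^2 / 8 + 1"
    using zero_le_power2[of "z - 4"] by (simp add: power2_eq_square algebra_simps)
  ultimately have "z^2 \<le> 16 * \<Lambda>" using assms(2,3) by linarith
  also have "\<dots> \<le> (4 * \<Lambda>)^2" using assms(2) by (simp add: power2_eq_square)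
  finally show ?thesis by (rule power2_le_imp_le) (use assms(2) in simp)
qed

lemma bound_of_quarter_le_ln:
  fixes z \<Lambda> :: real
  assumes "0 < z" "1 \<le> \<Lambda>" "z / 4 \<le> ln z + \<Lambda>"
  shows "z \<le> 24 * \<Lambda>"
proof -
  have "ln (8::real) = 3 * ln 2" using ln_realpow[of 2 3] by simp
  then have "ln z = ln (z / 8) + 3 * ln 2"
    using assms(1) by (simp add: ln_div)
  moreover have "ln (z / 8) \<le> z / 8 - 1" using ln_le_minus_one assms(1) by simp
  ultimately have "ln z \<le> z / 8 + 2" using ln_2_less_1 by linarith
  then show ?thesis using assms(2,3) by linarith
qed

lemma norm_subgradient_le_lipschitz:
  fixes f :: "'a::real_inner \<Rightarrow> real"
  assumes "G-lipschitz_on UNIV f" "\<And>y. f x + g \<bullet> (y - x) \<le> f y"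
  shows "norm g \<le> G"
proof -
  have "(norm g)^2 \<le> f (x + g) - f x"
    using assms(2)[of "x + g"] by (simp add: power2_norm_eq_inner)
  also have "\<dots> \<le> G * norm g"
    using lipschitz_onD[OF assms(1), of "x + g" x] by (simp add: dist_norm dist_real_def)
  finally have "norm g * norm g \<le> G * norm g" by (simp add: power2_eq_square)
  then show ?thesis using lipschitz_on_nonneg[OF assms(1)]
    by (cases "norm g = 0") (auto simp: mult_le_cancel_right)
qed

lemma abs_le_Max_norm_scaleR:
  fixes c :: real and h :: "nat \<Rightarrow> 'a::real_normed_vector"
  assumes "1 \<le> (\<Sum>t=1..T. (norm (h t))^2)"
  defines "M \<equiv> Max ((\<lambda>t. norm (c *\<^sub>R h t)) ` {1..T})"
  shows "0 \<le> M" "\<bar>c\<bar> \<le> M * sqrt (real T)"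
proof -
  have "1 \<le> T" using assms(1) by (cases T) auto
  have M_ge: "norm (c *\<^sub>R h t) \<le> M" if "t \<in> {1..T}" for t
    unfolding M_def using that by (intro Max_ge) auto
  have "norm (c *\<^sub>R h 1) \<le> M" using \<open>1 \<le> T\<close> by (intro M_ge) simp
  then show "0 \<le> M" by (meson norm_ge_zero order_trans)
  have "c^2 * 1 \<le> c^2 * (\<Sum>t=1..T. (norm (h t))^2)"
    using assms(1) by (intro mult_left_mono) auto
  also have "\<dots> = (\<Sum>t=1..T. (norm (c *\<^sub>R h t))^2)"
    by (simp add: sum_distrib_left power_mult_distrib)
  also have "\<dots> \<le> (\<Sum>t=1..T. M^2)"
    using M_ge by (intro sum_mono power_mono) auto
  also have "\<dots> = (M * sqrt (real T))^2" by (simp add: power_mult_distrib)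
  finally have "\<bar>c\<bar> \<le> \<bar>M * sqrt (real T)\<bar>" by (simp only: abs_le_square_iff mult_1_right)
  then show "\<bar>c\<bar> \<le> M * sqrt (real T)" using \<open>0 \<le> M\<close> by simp
qed

lemma polylog3_const_mult_ln:
  assumes "0 \<le> C"
  shows "polylog3 (\<lambda>x y z. C * ln (exp 1 + x + y + z))"
  unfolding polylog3_def
proof (intro exI allI impI)
  fix x y z :: real
  assume "0 \<le> x" "0 \<le> y" "0 \<le> z"
  then have "1 \<le> exp 1 + x + y + z" using exp_ge_add_one_self[of 1] by linarith
  then show "\<bar>C * ln (exp 1 + x + y + z)\<bar> \<le> C * ln (exp 1 + x + y + z) ^ 1"
    using assms by simp
qed

section \<open>The FreeGrad potential\<close>

definition freegrad_potential :: "real \<Rightarrow> real \<Rightarrow> real \<Rightarrow> real \<Rightarrow> real" where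
  "freegrad_potential eps G s v = eps * G^2 / sqrt v * exp (s^2 / (2 * v + 2 * G * \<bar>s\<bar>))"

text \<open>\<open>freegrad_slope G s v * freegrad_potential eps G s v\<close> is the derivative of the potential in \<open>s\<close>.\<close>

definition freegrad_slope :: "real \<Rightarrow> real \<Rightarrow> real \<Rightarrow> real" where
  "freegrad_slope G s v = s * (2 * v + G * \<bar>s\<bar>) / (2 * (v + G * \<bar>s\<bar>)^2)"

lemma freegrad_pred_eq_slope:
  fixes s :: real
  shows "freegrad_pred eps G s v = - freegrad_slope G s v * freegrad_potential eps G s v"
  unfolding freegrad_pred_def freegrad_slope_def freegrad_potential_def by simp

lemma freegrad_slope_bounds:
  fixes s v :: real
  assumes "0 \<le> s" "0 < v"
  shows "0 \<le> freegrad_slope 1 s v" "freegrad_slope 1 s v < 1"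
proof -
  have "2 * (v + s)^2 - s * (2 * v + s) = 2 * v^2 + 2 * v * s + s^2" by algebra
  moreover have "0 < 2 * v^2 + 2 * v * s + s^2" using assms by (simp add: add_pos_nonneg)
  ultimately have "s * (2 * v + s) < 2 * (v + s)^2" by linarith
  then show "freegrad_slope 1 s v < 1" using assms by (simp add: freegrad_slope_def)
  show "0 \<le> freegrad_slope 1 s v" using assms by (simp add: freegrad_slope_def)
qed

lemma freegrad_exponent_increment_up:
  fixes s v t :: real
  assumes "0 \<le> s" "0 < v" "0 \<le> t" "t \<le> 1"
  defines "y \<equiv> freegrad_slope 1 s v"
  shows "(s + t)^2 / (2 * (v + t^2) + 2 * (s + t)) - s^2 / (2 * v + 2 * s)
    \<le> t^2 / (2 * v + t^2) + (t * y - (t * y)^2 / 2)"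
proof -
  define u where "u = 1 - t"
  have "0 \<le> u" using assms unfolding u_def by simp
  have pos: "0 < v + s" "0 < 2 * v + t^2" "0 < v + t^2 + s + t"
    using assms(1-3) zero_le_power2[of t] by linarith+
  define X where "X = t^2 / (2 * v + t^2)"
  define Z1 where "Z1 = (s + t)^2 / (2 * (v + t^2) + 2 * (s + t))"
  define Z2 where "Z2 = s^2 / (2 * v + 2 * s)"
  have eX: "X * (2 * v + t^2) = t^2" unfolding X_def using pos by simp
  have eY: "y * (2 * (v + s)^2) = s * (2 * v + s)"
    unfolding y_def freegrad_slope_def using pos assms(1) by simp
  have eZ1: "Z1 * (2 * (v + t^2) + 2 * (s + t)) = (s + t)^2" unfolding Z1_def using pos by simp
  have eZ2: "Z2 * (2 * v + 2 * s) = s^2" unfolding Z2_def using pos by simp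
  define D where "D = 8 * (v + s)^4 * (2 * v + t^2) * (v + t^2 + s + t)"
  have "0 < D" unfolding D_def using pos by simp
  \<comment> \<open>Certificate: after clearing denominators and substituting \<open>t = 1 - u\<close>,
    every coefficient is nonnegative.\<close>
  define C where "C =
     8 * v^4 * t^3 * u + 12 * v^4 * t^4 + 32 * s * v^3 * t^3 * u^2 + 88 * s * v^3 * t^4 * u +
     64 * s * v^3 * t^5 + 24 * s * v^4 * t^2 * u + 40 * s * v^4 * t^3 +
     48 * s^2 * v^2 * t^3 * u^3 + 188 * s^2 * v^2 * t^4 * u^2 + 248 * s^2 * v^2 * t^5 * u +
     104 * s^2 * v^2 * t^6 + 72 * s^2 * v^3 * t^2 * u^2 + 176 * s^2 * v^3 * t^3 * u +
     96 * s^2 * v^3 * t^4 + 32 * s^3 * v * t^3 * u^3 + 128 * s^3 * v * t^4 * u^2 +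
     172 * s^3 * v * t^5 * u + 72 * s^3 * v * t^6 + 80 * s^3 * v^2 * t^2 * u^2 +
     184 * s^3 * v^2 * t^3 * u + 100 * s^3 * v^2 * t^4 + 8 * s^3 * v^3 * t^2 +
     8 * s^4 * t^3 * u^3 + 32 * s^4 * t^4 * u^2 + 43 * s^4 * t^5 * u + 18 * s^4 * t^6 +
     40 * s^4 * v * t^2 * u^2 + 86 * s^4 * v * t^3 * u + 51 * s^4 * v * t^4 +
     14 * s^4 * v^2 * t^2 + 8 * s^5 * t^2 * u^2 + 16 * s^5 * t^3 * u + 11 * s^5 * t^4 +
     6 * s^5 * v * t^2"
  have "D * (X + (t * y - (t * y)^2 / 2) - (Z1 - Z2)) = C"
    unfolding C_def D_def u_def using eX eY eZ1 eZ2 by algebra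
  also have "0 \<le> C"
    unfolding C_def using assms \<open>0 \<le> u\<close> by (intro add_nonneg_nonneg mult_nonneg_nonneg zero_le_power; simp)
  finally have "0 \<le> X + (t * y - (t * y)^2 / 2) - (Z1 - Z2)"
    using \<open>0 < D\<close> by (simp add: zero_le_mult_iff)
  then show ?thesis unfolding X_def Z1_def Z2_def by simp
qed

lemma freegrad_increment_down_poly_nonneg:
  fixes s v t :: real
  assumes "0 \<le> s" "0 \<le> v" "0 \<le> t" "t \<le> 1"
  defines "R \<equiv> 2 * (v + s)^2 - t * s * (2 * v + s)" and "Q \<equiv> v + t^2 + \<bar>s - t\<bar>"
  shows "0 \<le> 4 * (v + s)^2 * R * Q * t^2 - 2 * t * s * (2 * v + s) * R * (2 * v + t^2) * Q
    - t^2 * s^2 * (2 * v + s)^2 * (2 * v + t^2) * Q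
    - (2 * (v + s)^2 * R * (2 * v + t^2) * (s - t)^2 - 2 * (v + s) * R * (2 * v + t^2) * Q * s^2)"
proof -
  define u where "u = 1 - t"
  have "0 \<le> u" using assms unfolding u_def by simp
  \<comment> \<open>Certificates: with \<open>t = 1 - u\<close> and \<open>p = \<bar>s - t\<bar>\<close> every coefficient is nonnegative.\<close>
  show ?thesis
  proof (cases "t \<le> s")
    case True
    define p where "p = s - t"
    have "0 \<le> p" using True unfolding p_def by simp
    have "4 * (v + s)^2 * R * Q * t^2 - 2 * t * s * (2 * v + s) * R * (2 * v + t^2) * Q
      - t^2 * s^2 * (2 * v + s)^2 * (2 * v + t^2) * Q
      - (2 * (v + s)^2 * R * (2 * v + t^2) * (s - t)^2 - 2 * (v + s) * R * (2 * v + t^2) * Q * s^2)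
      = 8 * t^8 * u^2 + 12 * t^9 * u + 3 * t^10 + 8 * v * t^6 * u^3 + 52 * v * t^7 * u^2 +
       57 * v * t^8 * u + 11 * v * t^9 + 32 * v^2 * t^5 * u^2 + 82 * v^2 * t^6 * u +
       16 * v^2 * t^7 + 40 * v^3 * t^4 * u^2 + 64 * v^3 * t^5 * u + 12 * v^3 * t^6 +
       16 * v^4 * t^3 * u + 4 * v^4 * t^4 + 8 * p * t^6 * u^3 + 52 * p * t^7 * u^2 +
       67 * p * t^8 * u + 17 * p * t^9 + 64 * p * v * t^5 * u^3 + 262 * p * v * t^6 * u^2 +
       264 * p * v * t^7 * u + 54 * p * v * t^8 + 144 * p * v^2 * t^4 * u^3 +
       436 * p * v^2 * t^5 * u^2 + 360 * p * v^2 * t^6 * u + 64 * p * v^2 * t^7 +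
       112 * p * v^3 * t^3 * u^2 + 168 * p * v^3 * t^4 * u + 36 * p * v^3 * t^5 +
       24 * p * v^4 * t^2 * u + 8 * p * v^4 * t^3 + 32 * p^2 * t^5 * u^3 + 128 * p^2 * t^6 * u^2 +
       148 * p^2 * t^7 * u + 38 * p^2 * t^8 + 144 * p^2 * v * t^4 * u^3 +
       480 * p^2 * v * t^5 * u^2 + 458 * p^2 * v * t^6 * u + 98 * p^2 * v * t^7 +
       192 * p^2 * v^2 * t^3 * u^3 + 544 * p^2 * v^2 * t^4 * u^2 + 442 * p^2 * v^2 * t^5 * u +
       82 * p^2 * v^2 * t^6 + 72 * p^2 * v^3 * t^2 * u^2 + 112 * p^2 * v^3 * t^3 * u +
       24 * p^2 * v^3 * t^4 + 48 * p^3 * t^4 * u^3 + 152 * p^3 * t^5 * u^2 + 162 * p^3 * t^6 * u +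
       42 * p^3 * t^7 + 128 * p^3 * v * t^3 * u^3 + 388 * p^3 * v * t^4 * u^2 +
       360 * p^3 * v * t^5 * u + 80 * p^3 * v * t^6 + 80 * p^3 * v^2 * t^2 * u^3 +
       236 * p^3 * v^2 * t^3 * u^2 + 196 * p^3 * v^2 * t^4 * u + 36 * p^3 * v^2 * t^5 +
       8 * p^3 * v^3 * t^2 * u + 32 * p^4 * t^3 * u^3 + 88 * p^4 * t^4 * u^2 +
       88 * p^4 * t^5 * u + 23 * p^4 * t^6 + 40 * p^4 * v * t^2 * u^3 +
       124 * p^4 * v * t^3 * u^2 + 117 * p^4 * v * t^4 * u + 27 * p^4 * v * t^5 +
       14 * p^4 * v^2 * t^2 * u + 2 * p^4 * v^2 * t^3 + 8 * p^5 * t^2 * u^3 +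
       20 * p^5 * t^3 * u^2 + 19 * p^5 * t^4 * u + 5 * p^5 * t^5 + 6 * p^5 * v * t^2 * u +
       2 * p^5 * v * t^3"
      unfolding R_def Q_def p_def u_def using True by (simp only: abs_of_nonneg diff_ge_0_iff_ge) algebra
    also have "0 \<le> \<dots>"
      using assms(2,3) \<open>0 \<le> u\<close> \<open>0 \<le> p\<close> by (intro add_nonneg_nonneg mult_nonneg_nonneg zero_le_power; simp)
    finally show ?thesis .
  next
    case False
    define p where "p = t - s"
    have "0 \<le> p" using False unfolding p_def by simp
    have "4 * (v + s)^2 * R * Q * t^2 - 2 * t * s * (2 * v + s) * R * (2 * v + t^2) * Q
      - t^2 * s^2 * (2 * v + s)^2 * (2 * v + t^2) * Q
      - (2 * (v + s)^2 * R * (2 * v + t^2) * (s - t)^2 - 2 * (v + s) * R * (2 * v + t^2) * Q * s^2)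
      = 8 * s^4 * p^3 * u^3 + 20 * s^4 * p^4 * u^2 + 11 * s^4 * p^5 * u + 16 * s^5 * p^2 * u^3 +
       76 * s^5 * p^3 * u^2 + 68 * s^5 * p^4 * u + 7 * s^5 * p^5 + 8 * s^6 * p * u^3 +
       100 * s^6 * p^2 * u^2 + 150 * s^6 * p^3 * u + 31 * s^6 * p^4 + 52 * s^7 * p * u^2 +
       152 * s^7 * p^2 * u + 54 * s^7 * p^3 + 8 * s^8 * u^2 + 71 * s^8 * p * u + 46 * s^8 * p^2 +
       12 * s^9 * u + 19 * s^9 * p + 3 * s^10 + 32 * v * s^3 * p^3 * u^3 +
       80 * v * s^3 * p^4 * u^2 + 44 * v * s^3 * p^5 * u + 56 * v * s^4 * p^2 * u^3 +
       266 * v * s^4 * p^3 * u^2 + 221 * v * s^4 * p^4 * u + 9 * v * s^4 * p^5 +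
       48 * v * s^5 * p * u^3 + 384 * v * s^5 * p^2 * u^2 + 488 * v * s^5 * p^3 * u +
       55 * v * s^5 * p^4 + 8 * v * s^6 * u^3 + 250 * v * s^6 * p * u^2 +
       546 * v * s^6 * p^2 * u + 122 * v * s^6 * p^3 + 52 * v * s^7 * u^2 +
       292 * v * s^7 * p * u + 126 * v * s^7 * p^2 + 57 * v * s^8 * u + 61 * v * s^8 * p +
       11 * v * s^9 + 48 * v^2 * s^2 * p^3 * u^3 + 128 * v^2 * s^2 * p^4 * u^2 +
       86 * v^2 * s^2 * p^5 * u + 10 * v^2 * s^2 * p^6 + 64 * v^2 * s^3 * p^2 * u^3 +
       332 * v^2 * s^3 * p^3 * u^2 + 306 * v^2 * s^3 * p^4 * u + 32 * v^2 * s^3 * p^5 +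
       96 * v^2 * s^4 * p * u^3 + 514 * v^2 * s^4 * p^2 * u^2 + 596 * v^2 * s^4 * p^3 * u +
       68 * v^2 * s^4 * p^4 + 32 * v^2 * s^5 * u^3 + 424 * v^2 * s^5 * p * u^2 +
       716 * v^2 * s^5 * p^2 * u + 128 * v^2 * s^5 * p^3 + 114 * v^2 * s^6 * u^2 +
       438 * v^2 * s^6 * p * u + 146 * v^2 * s^6 * p^2 + 98 * v^2 * s^7 * u + 80 * v^2 * s^7 * p +
       16 * v^2 * s^8 + 32 * v^3 * s * p^3 * u^2 + 64 * v^3 * s * p^4 * u + 20 * v^3 * s * p^5 +
       24 * v^3 * s^2 * p^2 * u^2 + 112 * v^3 * s^2 * p^3 * u + 36 * v^3 * s^2 * p^4 +
       80 * v^3 * s^3 * p * u^2 + 176 * v^3 * s^3 * p^2 * u + 32 * v^3 * s^3 * p^3 +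
       40 * v^3 * s^4 * u^2 + 192 * v^3 * s^4 * p * u + 48 * v^3 * s^4 * p^2 +
       64 * v^3 * s^5 * u + 44 * v^3 * s^5 * p + 12 * v^3 * s^6 + 8 * v^4 * p^3 * u +
       12 * v^4 * p^4 + 8 * v^4 * s * p^3 + 24 * v^4 * s^2 * p * u + 16 * v^4 * s^3 * u +
       8 * v^4 * s^3 * p + 4 * v^4 * s^4"
      unfolding R_def Q_def p_def u_def using False by (simp only: abs_of_neg diff_less_0_iff_less not_le) algebra
    also have "0 \<le> \<dots>"
      using assms(1,2) \<open>0 \<le> u\<close> \<open>0 \<le> p\<close> by (intro add_nonneg_nonneg mult_nonneg_nonneg zero_le_power; simp)
    finally show ?thesis .
  qed
qed

lemma freegrad_exponent_increment_down:
  fixes s v t :: real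
  assumes "0 \<le> s" "0 < v" "0 \<le> t" "t \<le> 1"
  defines "y \<equiv> freegrad_slope 1 s v"
  shows "(s - t)^2 / (2 * (v + t^2) + 2 * \<bar>s - t\<bar>) - s^2 / (2 * v + 2 * s)
    \<le> t^2 / (2 * v + t^2) + (- (t * y) - (t * y)^2 / (2 * (1 - t * y)))"
proof -
  have "t * y \<le> y" "y < 1"
    using freegrad_slope_bounds[OF assms(1,2)] assms(3,4) unfolding y_def
    by (simp_all add: mult_left_le_one_le)
  then have "t * y < 1" by linarith
  define Q where "Q = v + t^2 + \<bar>s - t\<bar>"
  define R where "R = 2 * (v + s)^2 - t * s * (2 * v + s)"
  have pos: "0 < v + s" "0 < 2 * v + t^2" "0 < Q"
    using assms(1-3) zero_le_power2[of t] unfolding Q_def by linarith+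
  define X where "X = t^2 / (2 * v + t^2)"
  define Z1 where "Z1 = (s - t)^2 / (2 * (v + t^2) + 2 * \<bar>s - t\<bar>)"
  define Z2 where "Z2 = s^2 / (2 * v + 2 * s)"
  define Z3 where "Z3 = (t * y)^2 / (2 * (1 - t * y))"
  have eX: "X * (2 * v + t^2) = t^2" unfolding X_def using pos by simp
  have eY: "y * (2 * (v + s)^2) = s * (2 * v + s)"
    unfolding y_def freegrad_slope_def using pos assms(1) by simp
  have eZ1: "Z1 * (2 * Q) = (s - t)^2" unfolding Z1_def Q_def using pos(3) Q_def by simp
  have eZ2: "Z2 * (2 * v + 2 * s) = s^2" unfolding Z2_def using pos by simp
  have eZ3: "Z3 * (2 * (1 - t * y)) = (t * y)^2" unfolding Z3_def using \<open>t * y < 1\<close> by simp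
  have eR: "R = 2 * (v + s)^2 * (1 - t * y)" unfolding R_def using eY by algebra
  define D where "D = 4 * (v + s)^2 * R * (2 * v + t^2) * Q"
  have "0 < D" unfolding D_def eR using pos \<open>t * y < 1\<close> by simp
  define E where "E =
    4 * (v + s)^2 * R * Q * t^2 - 2 * t * s * (2 * v + s) * R * (2 * v + t^2) * Q
    - t^2 * s^2 * (2 * v + s)^2 * (2 * v + t^2) * Q
    - (2 * (v + s)^2 * R * (2 * v + t^2) * (s - t)^2 - 2 * (v + s) * R * (2 * v + t^2) * Q * s^2)"
  have "D * (X + (- (t * y) - Z3) - (Z1 - Z2)) = E"
  proof -
    have "D * X = 4 * (v + s)^2 * R * Q * (X * (2 * v + t^2))"
      unfolding D_def by algebra
    moreover have "D * (t * y) = 2 * t * (y * (2 * (v + s)^2)) * R * (2 * v + t^2) * Q"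
      unfolding D_def by algebra
    moreover have "D * Z3 = t^2 * s^2 * (2 * v + s)^2 * (2 * v + t^2) * Q"
    proof -
      have "D * Z3 = 4 * (v + s)^4 * (2 * v + t^2) * Q * (Z3 * (2 * (1 - t * y)))"
        unfolding D_def eR by algebra
      also have "\<dots> = (2 * v + t^2) * Q * t^2 * (y * (2 * (v + s)^2))^2"
        unfolding eZ3 by algebra
      finally show ?thesis unfolding eY by algebra
    qed
    moreover have "D * Z1 = 2 * (v + s)^2 * R * (2 * v + t^2) * (s - t)^2"
      unfolding eZ1[symmetric] D_def by algebra
    moreover have "D * Z2 = 2 * (v + s) * R * (2 * v + t^2) * Q * s^2"
      unfolding eZ2[symmetric] D_def by algebra
    ultimately show ?thesis unfolding eX eY E_def by (simp add: algebra_simps)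
  qed
  also have "0 \<le> E"
    unfolding E_def Q_def R_def using assms(1) less_imp_le[OF assms(2)] assms(3,4)
    by (rule freegrad_increment_down_poly_nonneg)
  finally have "0 \<le> X + (- (t * y) - Z3) - (Z1 - Z2)"
    using \<open>0 < D\<close> by (simp add: zero_le_mult_iff)
  then show ?thesis unfolding X_def Z1_def Z2_def Z3_def by simp
qed

lemma freegrad_potential_step_normalized_nonneg:
  fixes s v g :: real
  assumes "0 \<le> s" "0 < v" "\<bar>g\<bar> \<le> 1"
  shows "freegrad_potential 1 1 (s + g) (v + g^2)
    \<le> freegrad_potential 1 1 s v * (1 + g * freegrad_slope 1 s v)"
proof -
  define y where "y = freegrad_slope 1 s v"
  have "0 \<le> y" "y < 1" using freegrad_slope_bounds[OF assms(1,2)] unfolding y_def by simp_all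
  have "\<bar>g * y\<bar> \<le> y"
    using \<open>0 \<le> y\<close> assms(3) by (simp add: abs_mult mult_left_le_one_le)
  then have "-1 < g * y" using \<open>y < 1\<close> by linarith
  define e0 where "e0 = s^2 / (2 * v + 2 * s)"
  define e1 where "e1 = (s + g)^2 / (2 * (v + g^2) + 2 * \<bar>s + g\<bar>)"
  \<comment> \<open>The exponent increment splits into \<open>g^2 / (2 * v + g^2)\<close>, paid for by the growth of \<open>sqrt v\<close>,
    and a term bounded by \<open>ln (1 + g * y)\<close>.\<close>
  obtain l where incr: "e1 - e0 \<le> g^2 / (2 * v + g^2) + l" and l: "l \<le> ln (1 + g * y)"
  proof (cases "0 \<le> g")
    case True
    then have "\<bar>s + g\<bar> = s + g" using assms(1) by simp
    then show thesis
      using that freegrad_exponent_increment_up[OF assms(1,2) True] assms(3) True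
        ln_one_plus_nonneg_lower_bound[of "g * y"] \<open>0 \<le> y\<close>
      unfolding e0_def e1_def y_def by simp
  next
    case False
    then have "g * y \<le> 0" using \<open>0 \<le> y\<close> by (simp add: mult_nonpos_nonneg)
    then show thesis
      using that freegrad_exponent_increment_down[OF assms(1,2), of "- g"] assms(3) False
        ln_one_plus_nonpos_lower_bound[of "g * y"] \<open>-1 < g * y\<close>
      unfolding e0_def e1_def y_def by simp
  qed
  have "exp l \<le> 1 + g * y"
    using l \<open>-1 < g * y\<close> by (metis add.commute diff_gt_0_iff_gt diff_minus_eq_add exp_le_cancel_iff exp_ln)
  have "exp (g^2 / (2 * v + g^2)) \<le> sqrt ((v + g^2) / v)"
  proof -
    have "2 * (g^2 / v) / (2 + g^2 / v) \<le> ln (1 + g^2 / v)"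
      using assms(2) by (intro ln_one_plus_pade_lower_bound) simp
    moreover have "2 * (g^2 / v) / (2 + g^2 / v) = 2 * (g^2 / (2 * v + g^2))"
      "1 + g^2 / v = (v + g^2) / v"
      using assms(2) by (simp_all add: field_simps)
    ultimately have "exp (2 * (g^2 / (2 * v + g^2))) \<le> (v + g^2) / v"
      using assms(2) by (metis add_pos_nonneg divide_pos_pos exp_le_cancel_iff exp_ln zero_le_power2)
    then show ?thesis
      by (simp add: real_le_rsqrt exp_double[symmetric] power2_eq_square mult_exp_exp)
  qed
  have "0 < v + g^2" using add_pos_nonneg[OF assms(2) zero_le_power2[of g]] .
  have "exp e1 \<le> exp e0 * exp (g^2 / (2 * v + g^2)) * exp l"
    using incr by (simp add: exp_add[symmetric])
  also have "\<dots> \<le> exp e0 * sqrt ((v + g^2) / v) * (1 + g * y)"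
    using \<open>exp l \<le> 1 + g * y\<close> \<open>exp (g^2 / (2 * v + g^2)) \<le> _\<close> \<open>0 < v + g^2\<close> assms(2)
    by (intro mult_mono mult_left_mono) auto
  finally have "exp e1 / sqrt (v + g^2) \<le> exp e0 * sqrt ((v + g^2) / v) * (1 + g * y) / sqrt (v + g^2)"
    by (rule divide_right_mono) (use \<open>0 < v + g^2\<close> in simp)
  also have "\<dots> = exp e0 / sqrt v * (1 + g * y)"
    using \<open>0 < v + g^2\<close> by (simp add: real_sqrt_divide)
  finally show ?thesis
    using assms(1) unfolding freegrad_potential_def e0_def e1_def y_def by simp
qed

lemma freegrad_potential_step_normalized:
  fixes s v g :: real
  assumes "0 < v" "\<bar>g\<bar> \<le> 1"
  shows "freegrad_potential 1 1 (s + g) (v + g^2)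
    \<le> freegrad_potential 1 1 s v * (1 + g * freegrad_slope 1 s v)"
proof (cases "0 \<le> s")
  case True
  then show ?thesis using freegrad_potential_step_normalized_nonneg assms by blast
next
  case False
  have "freegrad_potential 1 1 (- s + - g) (v + (- g)^2)
      \<le> freegrad_potential 1 1 (- s) v * (1 + - g * freegrad_slope 1 (- s) v)"
    using False assms by (intro freegrad_potential_step_normalized_nonneg) auto
  moreover have "(- s + - g)^2 = (s + g)^2" "\<bar>- s + - g\<bar> = \<bar>s + g\<bar>"
    by (simp_all add: power2_eq_square algebra_simps abs_minus_commute)
  ultimately show ?thesis by (simp add: freegrad_potential_def freegrad_slope_def)
qed

lemma freegrad_potential_scale:
  fixes s v :: real
  assumes "0 < G" "0 < v"
  shows "freegrad_potential eps G s v = eps * G * freegrad_potential 1 1 (s / G) (v / G^2)"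
proof -
  have "2 * (v / G^2) + 2 * 1 * \<bar>s / G\<bar> = (2 * v + 2 * G * \<bar>s\<bar>) / G^2"
    using assms by (simp add: field_simps power2_eq_square abs_div)
  then have exponent: "(s / G)^2 / (2 * (v / G^2) + 2 * 1 * \<bar>s / G\<bar>) = s^2 / (2 * v + 2 * G * \<bar>s\<bar>)"
    using assms by (simp add: power_divide)
  have factor: "1 * 1^2 / sqrt (v / G^2) = G / sqrt v"
    using assms by (simp add: real_sqrt_divide)
  show ?thesis
    unfolding freegrad_potential_def exponent factor by (simp add: power2_eq_square)
qed

lemma freegrad_slope_scale:
  fixes s v :: real
  assumes "0 < G" "0 < v"
  shows "freegrad_slope 1 (s / G) (v / G^2) = G * freegrad_slope G s v"
proof -
  have "2 * (v / G^2) + 1 * \<bar>s / G\<bar> = (2 * v + G * \<bar>s\<bar>) / G^2"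
    "v / G^2 + 1 * \<bar>s / G\<bar> = (v + G * \<bar>s\<bar>) / G^2"
    using assms by (simp_all add: field_simps power2_eq_square abs_div)
  moreover have "0 < v + G * \<bar>s\<bar>" using assms by (simp add: add_pos_nonneg)
  moreover have "s / G * (A / G^2) / (2 * (B / G^2)^2) = G * (s * A / (2 * B^2))" if "0 < B" for A B
    using assms that by (simp add: field_simps power2_eq_square)
  ultimately show ?thesis
    unfolding freegrad_slope_def by metis
qed

lemma freegrad_potential_step:
  fixes s v g :: real
  assumes "0 < G" "0 < eps" "0 < v" "\<bar>g\<bar> \<le> G"
  shows "freegrad_potential eps G (s + g) (v + g^2) + g * freegrad_pred eps G s v
    \<le> freegrad_potential eps G s v"
proof -
  define c where "c = g / G"
  have "\<bar>c\<bar> \<le> 1" using assms(1,4) unfolding c_def by (simp add: abs_div)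
  have "(s + g) / G = s / G + c" "(v + g^2) / G^2 = v / G^2 + c^2"
    using assms(1) unfolding c_def by (simp_all add: field_simps)
  moreover have "0 < v + g^2" using add_pos_nonneg[OF assms(3) zero_le_power2[of g]] .
  ultimately have "freegrad_potential eps G (s + g) (v + g^2)
      = eps * G * freegrad_potential 1 1 (s / G + c) (v / G^2 + c^2)"
    using freegrad_potential_scale[OF assms(1), of "v + g^2" eps "s + g"] by simp
  also have "\<dots> \<le> eps * G * (freegrad_potential 1 1 (s / G) (v / G^2)
      * (1 + c * freegrad_slope 1 (s / G) (v / G^2)))"
    using assms \<open>\<bar>c\<bar> \<le> 1\<close> by (intro mult_left_mono freegrad_potential_step_normalized) auto
  also have "\<dots> = freegrad_potential eps G s v * (1 + g * freegrad_slope G s v)"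
    using assms(1) freegrad_potential_scale[OF assms(1,3), of eps s] freegrad_slope_scale[OF assms(1,3), of s]
    unfolding c_def by simp
  finally show ?thesis by (simp add: freegrad_pred_eq_slope algebra_simps)
qed

lemma freegrad_loss_plus_potential_le:
  fixes g :: "nat \<Rightarrow> real"
  assumes "0 < G" "0 < eps" "\<forall>t\<in>{1..n}. \<bar>g t\<bar> \<le> G"
  shows "(\<Sum>t=1..n. g t * freegrad_pred eps G (\<Sum>i=1..t-1. g i) (G^2 + (\<Sum>i=1..t-1. (g i)^2)))
    + freegrad_potential eps G (\<Sum>t=1..n. g t) (G^2 + (\<Sum>t=1..n. (g t)^2)) \<le> eps * G"
  using assms(3)
proof (induction n)
  case 0
  show ?case using assms(1) by (simp add: freegrad_potential_def power2_eq_square)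
next
  case (Suc n)
  define s where "s = (\<Sum>t=1..n. g t)"
  define v where "v = G^2 + (\<Sum>t=1..n. (g t)^2)"
  have "0 < v" unfolding v_def using assms(1) by (simp add: add_pos_nonneg sum_nonneg)
  have "freegrad_potential eps G (s + g (Suc n)) (v + (g (Suc n))^2) + g (Suc n) * freegrad_pred eps G s v
      \<le> freegrad_potential eps G s v"
    using assms(1,2) \<open>0 < v\<close> Suc.prems by (intro freegrad_potential_step) auto
  then show ?case
    using Suc unfolding s_def v_def by (simp add: add.assoc)
qed

lemma bound_of_potential_exponent_lt_ln:
  fixes G V \<Lambda> a :: real
  assumes "0 < G" "G^2 \<le> V" "1 \<le> \<Lambda>" "0 < a"
    and "a^2 / (2 * V + 2 * G * a) < ln (a / sqrt V) + \<Lambda>"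
  shows "a \<le> 24 * \<Lambda> * sqrt V"
proof -
  have "0 < V" using assms(1,2) by (smt (verit) zero_less_power2)
  have "G \<le> sqrt V" using assms(1,2) by (simp add: real_le_rsqrt)
  have "0 < 2 * V + 2 * G * a" using assms(1,4) \<open>0 < V\<close> by (simp add: add_pos_pos)
  \<comment> \<open>The exponent is quadratic in \<open>a / sqrt V\<close> while \<open>G * a \<le> V\<close> and linear in \<open>a / G\<close> beyond.\<close>
  show ?thesis
  proof (cases "G * a \<le> V")
    case True
    have "(a / sqrt V)^2 / 4 = a^2 / (4 * V)" using \<open>0 < V\<close> by (simp add: power_divide)
    also have "\<dots> \<le> a^2 / (2 * V + 2 * G * a)"
      using True \<open>0 < 2 * V + 2 * G * a\<close> \<open>0 < V\<close> by (intro divide_left_mono) auto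
    finally have "(a / sqrt V)^2 / 4 \<le> ln (a / sqrt V) + \<Lambda>" using assms(5) by linarith
    moreover have "0 < a / sqrt V" using assms(4) \<open>0 < V\<close> by simp
    ultimately have "a / sqrt V \<le> 4 * \<Lambda>" using assms(3) by (intro bound_of_square_quarter_le_ln)
    then have "a \<le> 4 * \<Lambda> * sqrt V" using \<open>0 < V\<close> by (simp add: divide_le_eq)
    also have "\<dots> \<le> 24 * \<Lambda> * sqrt V" using \<open>0 < V\<close> assms(3) by simp
    finally show ?thesis .
  next
    case False
    have "(a / G) / 4 = a^2 / (4 * G * a)" using assms(4) by (simp add: power2_eq_square)
    also have "\<dots> \<le> a^2 / (2 * V + 2 * G * a)"
      using False \<open>0 < 2 * V + 2 * G * a\<close> assms(1,4) by (intro divide_left_mono) auto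
    moreover have "ln (a / sqrt V) \<le> ln (a / G)"
    proof -
      have "a / sqrt V \<le> a / G"
        using \<open>G \<le> sqrt V\<close> \<open>0 < V\<close> assms(1,4) by (intro divide_left_mono) auto
      then show ?thesis using \<open>0 < V\<close> assms(1,4) by simp
    qed
    ultimately have "(a / G) / 4 \<le> ln (a / G) + \<Lambda>" using assms(5) by linarith
    moreover have "0 < a / G" using assms(1,4) by simp
    ultimately have "a / G \<le> 24 * \<Lambda>" using assms(3) by (intro bound_of_quarter_le_ln)
    then have "a \<le> 24 * \<Lambda> * G" using assms(1) by (simp add: divide_le_eq)
    also have "\<dots> \<le> 24 * \<Lambda> * sqrt V" using \<open>G \<le> sqrt V\<close> assms(3) by simp
    finally show ?thesis .
  qed
qed

lemma freegrad_potential_conjugate_bound: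
  fixes G eps V \<Lambda> u S :: real
  assumes "0 < G" "0 < eps" "G^2 \<le> V" "1 \<le> \<Lambda>" "\<bar>u\<bar> * V \<le> eps * G^2 * exp \<Lambda>"
  shows "\<bar>u\<bar> * \<bar>S\<bar> - freegrad_potential eps G S V \<le> 24 * \<Lambda> * \<bar>u\<bar> * sqrt V"
proof (cases "\<bar>u\<bar> * \<bar>S\<bar> \<le> freegrad_potential eps G S V")
  case True
  moreover have "0 \<le> 24 * \<Lambda> * \<bar>u\<bar> * sqrt V"
    using order_trans[OF zero_le_power2 assms(3)] assms(4) by simp
  ultimately show ?thesis by linarith
next
  case False
  define a where "a = \<bar>S\<bar>"
  define q where "q = a^2 / (2 * V + 2 * G * a)"
  have "0 < V" using assms(1,3) by (smt (verit) zero_less_power2)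
  have pot: "freegrad_potential eps G S V = eps * G^2 / sqrt V * exp q"
    unfolding freegrad_potential_def q_def a_def by simp
  then have "0 < freegrad_potential eps G S V" using assms(1,2) \<open>0 < V\<close> by simp
  then have "0 < \<bar>u\<bar> * a" using False unfolding a_def by linarith
  then have "0 < a" "0 < \<bar>u\<bar>" unfolding a_def by (auto simp: zero_less_mult_iff)
  have "eps * G^2 / sqrt V * exp q < \<bar>u\<bar> * a" using False pot unfolding a_def by linarith
  then have "exp q < \<bar>u\<bar> * a * sqrt V / (eps * G^2)"
    using assms(1,2) \<open>0 < V\<close> by (simp add: field_simps)
  also have "\<dots> = a / sqrt V * (\<bar>u\<bar> * V / (eps * G^2))"
    using assms(1,2) \<open>0 < V\<close> by (simp add: field_simps)
  also have "\<dots> \<le> a / sqrt V * exp \<Lambda>"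
    using assms(1,2,5) \<open>0 < a\<close> \<open>0 < V\<close>
    by (intro mult_left_mono) (simp_all add: divide_le_eq mult.commute)
  finally have "q < ln (a / sqrt V) + \<Lambda>"
    using \<open>0 < a\<close> \<open>0 < V\<close> by (metis exp_add exp_less_cancel_iff exp_ln divide_pos_pos real_sqrt_gt_zero)
  then have "a \<le> 24 * \<Lambda> * sqrt V"
    using assms(1,3,4) \<open>0 < a\<close> unfolding q_def by (intro bound_of_potential_exponent_lt_ln)
  then have "\<bar>u\<bar> * a \<le> 24 * \<Lambda> * \<bar>u\<bar> * sqrt V"
    using \<open>0 < \<bar>u\<bar>\<close> by (simp add: mult_left_mono ac_simps)
  then show ?thesis using \<open>0 < freegrad_potential eps G S V\<close> unfolding a_def by linarith
qed

lemma freegrad_potential_conjugate_polylog: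
  fixes G eps V H T M u S :: real
  assumes "0 < G" "0 < eps" "G^2 \<le> V" "V \<le> 2 * G^2 * H" "1 \<le> H" "H \<le> T"
    and "0 \<le> M" "\<bar>u\<bar> \<le> M * sqrt T"
  shows "\<bar>u\<bar> * \<bar>S\<bar> - freegrad_potential eps G S V
    \<le> \<bar>u\<bar> * sqrt H * G * (240 * ln (exp 1 + M + T + 1 / eps))"
proof -
  define B where "B = exp 1 + M + T + 1 / eps"
  have "1 \<le> T" using assms(5,6) by simp
  then have "sqrt T \<le> sqrt (T^2)" by (intro real_sqrt_le_mono) (simp add: power2_eq_square)
  then have "sqrt T \<le> T" using \<open>1 \<le> T\<close> by simp
  have "2 \<le> exp (1::real)" using exp_ge_add_one_self[of 1] by simp
  moreover have "0 < 1 / eps" using assms(2) by simp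
  ultimately have "M \<le> B" "T \<le> B" "1 / eps \<le> B" "2 \<le> B" "exp 1 \<le> B"
    unfolding B_def using assms(7) \<open>1 \<le> T\<close> by linarith+
  have "1 \<le> ln B"
    using \<open>exp 1 \<le> B\<close> by (metis exp_gt_zero ln_exp ln_le_cancel_iff order_less_le_trans)
  have "\<bar>u\<bar> * (V / G^2) * (1 / eps) \<le> (B * B) * (2 * B) * B"
  proof (intro mult_mono)
    show "\<bar>u\<bar> \<le> B * B"
      using assms(8) \<open>M \<le> B\<close> \<open>sqrt T \<le> T\<close> \<open>T \<le> B\<close> assms(7) \<open>1 \<le> T\<close>
      by (smt (verit) mult_mono real_sqrt_ge_zero)
    have "2 * G^2 * H \<le> 2 * G^2 * B"
      using assms(6) \<open>T \<le> B\<close> by (intro mult_left_mono) auto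
    then have "V \<le> 2 * G^2 * B" using assms(4) by linarith
    then show "V / G^2 \<le> 2 * B"
      using assms(1) by (simp add: pos_divide_le_eq ac_simps)
  qed (use assms(2) order_trans[OF zero_le_power2 assms(3)] \<open>1 / eps \<le> B\<close> \<open>2 \<le> B\<close> in auto)
  also have "\<dots> \<le> B^5" using \<open>2 \<le> B\<close> by (simp add: power_def)
  also have "\<dots> = exp (5 * ln B)" using \<open>2 \<le> B\<close> by (simp add: exp_of_nat_mult[of 5, simplified])
  finally have "\<bar>u\<bar> * V \<le> eps * G^2 * exp (5 * ln B)"
    using assms(1,2) by (simp add: field_simps)
  then have "\<bar>u\<bar> * \<bar>S\<bar> - freegrad_potential eps G S V \<le> 24 * (5 * ln B) * \<bar>u\<bar> * sqrt V"
    using assms(1-3) \<open>1 \<le> ln B\<close> by (intro freegrad_potential_conjugate_bound) auto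
  also have "\<dots> \<le> 24 * (5 * ln B) * \<bar>u\<bar> * (2 * G * sqrt H)"
  proof -
    have "V \<le> 4 * G^2 * H" using assms(4,5) mult_nonneg_nonneg[OF zero_le_power2[of G], of H] by linarith
    then have "sqrt V \<le> sqrt (4 * G^2 * H)" by simp
    also have "\<dots> = 2 * G * sqrt H" using assms(1) by (simp add: real_sqrt_mult)
    finally show ?thesis using \<open>1 \<le> ln B\<close> by (intro mult_left_mono) auto
  qed
  finally show ?thesis unfolding B_def by (simp add: ac_simps)
qed

section \<open>The single-feature learner\<close>

text \<open>In the notation of the paper, \<open>sfl_sum\<close> and \<open>sfl_var\<close> are FreeGrad's statistics \<open>s\<close> and \<open>v\<close>
  after \<open>n\<close> rounds, \<open>sfl_coef eps G h Gr t\<close> is \<open>xhat_t\<close> and \<open>sfl_grad eps G h Gr t\<close> is \<open>ghat_t\<close>.\<close>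

definition sfl_sum ::
    "real \<Rightarrow> real \<Rightarrow> (nat \<Rightarrow> 'a::euclidean_space) \<Rightarrow> (nat \<Rightarrow> 'a list \<Rightarrow> 'a) \<Rightarrow> nat \<Rightarrow> real" where
  "sfl_sum eps G h Gr n = fst (sfl_state eps G h Gr n)"

definition sfl_var ::
    "real \<Rightarrow> real \<Rightarrow> (nat \<Rightarrow> 'a::euclidean_space) \<Rightarrow> (nat \<Rightarrow> 'a list \<Rightarrow> 'a) \<Rightarrow> nat \<Rightarrow> real" where
  "sfl_var eps G h Gr n = fst (snd (sfl_state eps G h Gr n))"

definition sfl_coef ::
    "real \<Rightarrow> real \<Rightarrow> (nat \<Rightarrow> 'a::euclidean_space) \<Rightarrow> (nat \<Rightarrow> 'a list \<Rightarrow> 'a) \<Rightarrow> nat \<Rightarrow> real" where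
  "sfl_coef eps G h Gr t =
     (if h t \<noteq> 0
      then freegrad_pred eps G (sfl_sum eps G h Gr (t - 1)) (sfl_var eps G h Gr (t - 1)) else 0)"

definition sfl_grad ::
    "real \<Rightarrow> real \<Rightarrow> (nat \<Rightarrow> 'a::euclidean_space) \<Rightarrow> (nat \<Rightarrow> 'a list \<Rightarrow> 'a) \<Rightarrow> nat \<Rightarrow> real" where
  "sfl_grad eps G h Gr t = Gr t (sfl_preds eps G h Gr t) \<bullet> h t"

lemma sfl_state_0:
  "sfl_preds eps G h Gr 0 = []" "sfl_sum eps G h Gr 0 = 0" "sfl_var eps G h Gr 0 = G^2"
  by (simp_all add: sfl_preds_def sfl_sum_def sfl_var_def)

lemma sfl_state_Suc:
  "sfl_preds eps G h Gr (Suc n) = sfl_preds eps G h Gr n @ [sfl_coef eps G h Gr (Suc n) *\<^sub>R h (Suc n)]"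
  "sfl_sum eps G h Gr (Suc n) = sfl_sum eps G h Gr n + sfl_grad eps G h Gr (Suc n)"
  "sfl_var eps G h Gr (Suc n) = sfl_var eps G h Gr n + (sfl_grad eps G h Gr (Suc n))^2"
proof -
  \<comment> \<open>No case split on \<open>h (Suc n) = 0\<close> is needed: then the state is frozen, but \<open>sfl_grad\<close> vanishes too.\<close>
  obtain s v xs where st: "sfl_state eps G h Gr n = (s, v, xs)" by (metis prod_cases3)
  show preds: "sfl_preds eps G h Gr (Suc n) = sfl_preds eps G h Gr n @ [sfl_coef eps G h Gr (Suc n) *\<^sub>R h (Suc n)]"
    using st by (simp add: sfl_preds_def sfl_coef_def sfl_sum_def sfl_var_def Let_def)
  show "sfl_sum eps G h Gr (Suc n) = sfl_sum eps G h Gr n + sfl_grad eps G h Gr (Suc n)"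
    "sfl_var eps G h Gr (Suc n) = sfl_var eps G h Gr n + (sfl_grad eps G h Gr (Suc n))^2"
    using st preds
    by (simp_all add: sfl_grad_def sfl_preds_def sfl_coef_def sfl_sum_def sfl_var_def Let_def)
qed

lemma sfl_sum_eq: "sfl_sum eps G h Gr n = (\<Sum>t=1..n. sfl_grad eps G h Gr t)"
  by (induction n) (simp_all add: sfl_state_0 sfl_state_Suc)

lemma sfl_var_eq: "sfl_var eps G h Gr n = G^2 + (\<Sum>t=1..n. (sfl_grad eps G h Gr t)^2)"
  by (induction n) (simp_all add: sfl_state_0 sfl_state_Suc)

lemma length_sfl_preds [simp]: "length (sfl_preds eps G h Gr n) = n"
  by (induction n) (simp_all add: sfl_state_0 sfl_state_Suc)

lemma take_sfl_preds: "n \<le> m \<Longrightarrow> take n (sfl_preds eps G h Gr m) = sfl_preds eps G h Gr n"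
  by (induction m) (auto simp: sfl_state_0 sfl_state_Suc le_Suc_eq)

lemma nth_sfl_preds:
  assumes "1 \<le> t" "t \<le> m"
  shows "sfl_preds eps G h Gr m ! (t - 1) = sfl_coef eps G h Gr t *\<^sub>R h t"
proof -
  obtain k where "t = Suc k" using assms(1) by (cases t) auto
  have "sfl_preds eps G h Gr m ! (t - 1) = take t (sfl_preds eps G h Gr m) ! (t - 1)"
    using assms by simp
  also have "\<dots> = sfl_preds eps G h Gr t ! (t - 1)" using assms(2) by (simp add: take_sfl_preds)
  finally show ?thesis unfolding \<open>t = Suc k\<close> by (simp add: sfl_state_Suc nth_append)
qed

lemma sfl_grad_bound:
  assumes "valid_env G T L Gr" "t \<in> {1..T}"
  shows "\<bar>sfl_grad eps G h Gr t\<bar> \<le> G * norm (h t)"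
proof -
  let ?hs = "sfl_preds eps G h Gr t"
  have "norm (Gr t ?hs) \<le> G"
    using assms unfolding valid_env_def
    by (intro norm_subgradient_le_lipschitz[of G "L t ?hs" "last ?hs"]) auto
  then show ?thesis
    unfolding sfl_grad_def by (meson Cauchy_Schwarz_ineq2 mult_right_mono norm_ge_zero order_trans)
qed

lemma sfl_var_ge: "G^2 \<le> sfl_var eps G h Gr n"
  by (simp add: sfl_var_eq sum_nonneg)

lemma sfl_var_le:
  assumes "valid_env G T L Gr"
  shows "sfl_var eps G h Gr T \<le> G^2 + G^2 * (\<Sum>t=1..T. (norm (h t))^2)"
proof -
  have sq: "(sfl_grad eps G h Gr t)^2 \<le> G^2 * (norm (h t))^2" if "t \<in> {1..T}" for t
  proof -
    have "\<bar>sfl_grad eps G h Gr t\<bar>^2 \<le> (G * norm (h t))^2"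
      by (rule power_mono[OF sfl_grad_bound[OF assms that, where eps = eps and h = h] abs_ge_zero])
    then show ?thesis by (simp add: power_mult_distrib)
  qed
  then show ?thesis unfolding sfl_var_eq sum_distrib_left by (intro add_left_mono sum_mono sq)
qed

lemma sfl_round_regret_le:
  fixes eps :: real and h :: "nat \<Rightarrow> 'a::euclidean_space"
  assumes "valid_env G T L Gr" "t \<in> {1..T}"
  defines "xs \<equiv> sfl_preds eps G h Gr T"
  shows "L t (take t xs) (xs ! (t - 1)) - L t (take t xs) (uh *\<^sub>R h t)
    \<le> (sfl_coef eps G h Gr t - uh) * sfl_grad eps G h Gr t"
proof -
  have hist: "take t xs = sfl_preds eps G h Gr t" using assms(2) unfolding xs_def by (simp add: take_sfl_preds)
  have xt: "xs ! (t - 1) = sfl_coef eps G h Gr t *\<^sub>R h t"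
    using assms(2) unfolding xs_def by (intro nth_sfl_preds) auto
  have "L t (take t xs) (last (take t xs)) + Gr t (take t xs) \<bullet> (uh *\<^sub>R h t - last (take t xs))
      \<le> L t (take t xs) (uh *\<^sub>R h t)"
    using assms(1,2) unfolding valid_env_def hist by auto
  moreover have "last (take t xs) = xs ! (t - 1)"
    using assms(2) unfolding hist xt by (cases t) (auto simp: sfl_state_Suc)
  ultimately show ?thesis
    unfolding xt hist sfl_grad_def by (simp add: inner_diff_right algebra_simps)
qed

lemma sfl_regret_le_potential:
  fixes h :: "nat \<Rightarrow> 'a::euclidean_space"
  assumes "0 < G" "0 < eps" "valid_env G T L Gr" "\<forall>t\<in>{1..T}. norm (h t) \<le> 1"
  defines "xs \<equiv> sfl_preds eps G h Gr T"
  shows "(\<Sum>t=1..T. L t (take t xs) (xs ! (t - 1)) - L t (take t xs) (uh *\<^sub>R h t))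
    \<le> eps * G + (\<bar>uh\<bar> * \<bar>sfl_sum eps G h Gr T\<bar>
      - freegrad_potential eps G (sfl_sum eps G h Gr T) (sfl_var eps G h Gr T))"
proof -
  let ?g = "sfl_grad eps G h Gr"
  have g_le: "\<forall>t\<in>{1..T}. \<bar>?g t\<bar> \<le> G"
    using sfl_grad_bound[OF assms(3)] assms(1,4) by (meson mult_left_le order_trans less_imp_le norm_ge_zero)
  have coef: "(\<Sum>t=1..T. ?g t * sfl_coef eps G h Gr t)
      = (\<Sum>t=1..T. ?g t * freegrad_pred eps G (\<Sum>i=1..t-1. ?g i) (G^2 + (\<Sum>i=1..t-1. (?g i)^2)))"
    by (intro sum.cong refl) (simp add: sfl_coef_def sfl_grad_def sfl_sum_eq sfl_var_eq)
  have "(\<Sum>t=1..T. L t (take t xs) (xs ! (t - 1)) - L t (take t xs) (uh *\<^sub>R h t))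
      \<le> (\<Sum>t=1..T. (sfl_coef eps G h Gr t - uh) * ?g t)"
    unfolding xs_def by (intro sum_mono sfl_round_regret_le[OF assms(3)])
  also have "\<dots> = (\<Sum>t=1..T. ?g t * freegrad_pred eps G (\<Sum>i=1..t-1. ?g i) (G^2 + (\<Sum>i=1..t-1. (?g i)^2)))
      - uh * sfl_sum eps G h Gr T"
    unfolding coef[symmetric] by (simp add: sfl_sum_eq sum_subtractf sum_distrib_left algebra_simps)
  also have "\<dots> \<le> eps * G - freegrad_potential eps G (sfl_sum eps G h Gr T) (sfl_var eps G h Gr T)
      - uh * sfl_sum eps G h Gr T"
    using freegrad_loss_plus_potential_le[OF assms(1,2) g_le] by (simp add: sfl_sum_eq sfl_var_eq)
  also have "\<dots> \<le> eps * G + (\<bar>uh\<bar> * \<bar>sfl_sum eps G h Gr T\<bar>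
      - freegrad_potential eps G (sfl_sum eps G h Gr T) (sfl_var eps G h Gr T))"
    by (simp add: abs_mult[symmetric] abs_ge_minus_self)
  finally show ?thesis .
qed

lemma sfl_regret_polylog_bound:
  fixes uh :: real and h :: "nat \<Rightarrow> 'a::euclidean_space"
  assumes "0 < G" "0 < eps" "valid_env G T L Gr" "\<forall>t\<in>{1..T}. norm (h t) \<le> 1"
    and "1 \<le> (\<Sum>t=1..T. (norm (h t))^2)"
  defines "xs \<equiv> sfl_preds eps G h Gr T" and "H \<equiv> \<Sum>t=1..T. (norm (h t))^2"
    and "M \<equiv> Max ((\<lambda>t. norm (uh *\<^sub>R h t)) ` {1..T})"
  shows "(\<Sum>t=1..T. L t (take t xs) (xs ! (t - 1)) - L t (take t xs) (uh *\<^sub>R h t))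
    \<le> eps * G + \<bar>uh\<bar> * sqrt H * G * (240 * ln (exp 1 + M + real T + 1 / eps))"
proof -
  let ?S = "sfl_sum eps G h Gr T" and ?V = "sfl_var eps G h Gr T"
  have "H \<le> (\<Sum>t=1..T. 1)"
    using assms(4) unfolding H_def by (intro sum_mono) (simp add: power_le_one)
  then have "H \<le> real T" by simp
  have "G^2 * 1 \<le> G^2 * H" using assms(5) unfolding H_def by (intro mult_left_mono) auto
  then have "?V \<le> 2 * G^2 * H" using sfl_var_le[OF assms(3), of eps h] unfolding H_def by linarith
  then have "\<bar>uh\<bar> * \<bar>?S\<bar> - freegrad_potential eps G ?S ?V
      \<le> \<bar>uh\<bar> * sqrt H * G * (240 * ln (exp 1 + M + real T + 1 / eps))"
    using assms(1,2,5) sfl_var_ge \<open>H \<le> real T\<close> abs_le_Max_norm_scaleR[OF assms(5), of uh]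
    unfolding H_def M_def by (intro freegrad_potential_conjugate_polylog) auto
  then show ?thesis using sfl_regret_le_potential[OF assms(1-4), of uh] unfolding xs_def by linarith
qed

theorem lemma1:
  shows "\<exists>P. polylog3 P \<and>
    (\<forall>(G::real) (eps::real) (T::nat) (h::nat \<Rightarrow> 'a::euclidean_space)
       (L::nat \<Rightarrow> 'a list \<Rightarrow> 'a \<Rightarrow> real) (Gr::nat \<Rightarrow> 'a list \<Rightarrow> 'a) (uh::real).
       G > 0 \<longrightarrow> eps > 0 \<longrightarrow> T \<ge> 1 \<longrightarrow>
       (\<forall>t\<in>{1..T}. norm (h t) \<le> 1) \<longrightarrow>
       (\<Sum>t=1..T. (norm (h t))\<^sup>2) \<ge> 1 \<longrightarrow>
       valid_env G T L Gr \<longrightarrow>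
       (let xs = sfl_preds eps G h Gr T; u = (\<lambda>t. uh *\<^sub>R h t) in
        (\<Sum>t=1..T. L t (take t xs) (xs ! (t - 1)) - L t (take t xs) (u t))
          \<le> eps * G + sqrt (\<Sum>t=1..T. (norm (u t))\<^sup>2) * G *
               P (Max ((\<lambda>t. norm (u t)) ` {1..T})) (real T) (1 / eps)))"
proof (intro exI conjI allI impI)
  show "polylog3 (\<lambda>x y z. 240 * ln (exp 1 + x + y + z))" by (rule polylog3_const_mult_ln) simp
  fix G eps :: real and T :: nat and h :: "nat \<Rightarrow> 'a"
    and L :: "nat \<Rightarrow> 'a list \<Rightarrow> 'a \<Rightarrow> real" and Gr :: "nat \<Rightarrow> 'a list \<Rightarrow> 'a" and uh :: real
  assume "G > 0" "eps > 0" "T \<ge> 1" "\<forall>t\<in>{1..T}. norm (h t) \<le> 1"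
    and "(\<Sum>t=1..T. (norm (h t))\<^sup>2) \<ge> 1" "valid_env G T L Gr"
  have "(\<Sum>t=1..T. (norm (uh *\<^sub>R h t))^2) = uh^2 * (\<Sum>t=1..T. (norm (h t))^2)"
    by (simp add: sum_distrib_left power_mult_distrib)
  then have "sqrt (\<Sum>t=1..T. (norm (uh *\<^sub>R h t))^2) = \<bar>uh\<bar> * sqrt (\<Sum>t=1..T. (norm (h t))^2)"
    by (simp add: real_sqrt_mult)
  then show "let xs = sfl_preds eps G h Gr T; u = (\<lambda>t. uh *\<^sub>R h t) in
        (\<Sum>t=1..T. L t (take t xs) (xs ! (t - 1)) - L t (take t xs) (u t))
          \<le> eps * G + sqrt (\<Sum>t=1..T. (norm (u t))\<^sup>2) * G *
               (240 * ln (exp 1 + Max ((\<lambda>t. norm (u t)) ` {1..T}) + real T + 1 / eps))"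
    unfolding Let_def using sfl_regret_polylog_bound[of G eps T L Gr h uh] \<open>G > 0\<close> \<open>eps > 0\<close>
      \<open>valid_env G T L Gr\<close> \<open>\<forall>t\<in>{1..T}. norm (h t) \<le> 1\<close> \<open>(\<Sum>t=1..T. (norm (h t))\<^sup>2) \<ge> 1\<close>
    by simp
qed

end
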